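(* Let $\Phi$ and $\Xi$ be subsets of Euclidean spaces, let $H:\Phi\times\Xi\to\mathbb{R}$ be a deterministic function and, for each $n$, let $H_n:\Phi\times\Xi\to\mathbb{R}$ be a random function (built from a sample of size $n$) with $H_n(\phi,\xi)\to H(\phi,\xi)$ in probability for every $(\phi,\xi)$. Define $$\hat\phi=\arg\inf_{\phi\in\Phi}\sup_{\xi\in\Xi}H_n(\phi,\xi),\qquad \phi^*=\arg\inf_{\phi\in\Phi}\sup_{\xi\in\Xi}H(\phi,\xi),$$ and for $\phi\in\Phi$ write $\xi(\phi)=\arg\sup_{t}H(\phi,t)$, $\xi_n(\phi)=\arg\sup_tH_n(\phi,t)$. Assume: (A1) the estimate $\hat\phi$ exists (not necessarily uniquely); (A2) $\sup_{\xi,\phi}|H_n(\phi,\xi)-H(\phi,\xi)|\to0$ in probability; (A3) for every $\phi$, for every $\varepsilon>0$ and every $\tilde\xi$ with $\|\tilde\xi-\xi(\phi)\|>\varepsilon$, there exists $\eta>0$ with $H(\phi,\xi(\phi))-H(\phi,\tilde\xi)>\eta$; (A4) the infimum of $\phi\mapsto H(\phi,\xi(\phi))$ is unique and isolated: for every $\varepsilon>0$ and every $\phi$ with $\|\phi-\phi^*\|>\varepsilon$, there exists $\eta>0$ with $H(\phi,\xi(\phi))-H(\phi^*,\xi(\phi^* ))>\eta$; (A5) for every $\phi\in\Phi$, the function $\xi\mapsto H(\phi,\xi)$ is continuous. Then $\hat\phi\to\phi^*$ in probability. *)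

theory Defs
  imports "HOL-Probability.Probability"
begin

definition outer_prob :: "'w measure \<Rightarrow> 'w set \<Rightarrow> real" where
  "outer_prob M A = (INF B \<in> {B \<in> sets M. A \<inter> space M \<subseteq> B}. measure M B)"

definition conv_in_prob :: "'w measure \<Rightarrow> (nat \<Rightarrow> 'w \<Rightarrow> 'a::metric_space) \<Rightarrow> 'a \<Rightarrow> bool" where
  "conv_in_prob M X c \<longleftrightarrow>
     (\<forall>e>0. (\<lambda>n. outer_prob M {\<omega> \<in> space M. dist (X n \<omega>) c > e}) \<longlonglongrightarrow> 0)"

end

theory Submission
  imports Defs
begin

text \<open>Only the uniform convergence (A2) and the well-separated minimum (A4) are needed. If \<open>H\<^sub>n\<close> is within \<open>d\<close> of \<open>H\<close> uniformly, then the
  minimax value of \<open>H\<close> at \<open>\<phi>\<^sub>n\<close> exceeds that at \<open>\<phi>\<^sup>*\<close> by at most \<open>2d\<close>. Choosing \<open>2d\<close> below the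
  separation margin of (A4) forces \<open>\<phi>\<^sub>n\<close> into the \<open>\<epsilon>\<close>-ball around \<open>\<phi>\<^sup>*\<close>, so the event
  \<open>\<parallel>\<phi>\<^sub>n - \<phi>\<^sup>*\<parallel> > \<epsilon>\<close> is contained in the event that the uniform error exceeds \<open>d\<close>, whose
  outer probability tends to zero.\<close>

lemma outer_prob_mono:
  assumes "A \<subseteq> B"
  shows "outer_prob M A \<le> outer_prob M B"
  unfolding outer_prob_def
proof (rule cINF_superset_mono)
  show "{C \<in> sets M. B \<inter> space M \<subseteq> C} \<noteq> {}" by auto
  show "bdd_below (measure M ` {C \<in> sets M. A \<inter> space M \<subseteq> C})"
    by (rule bdd_belowI[of _ 0]) auto
  show "{C \<in> sets M. B \<inter> space M \<subseteq> C} \<subseteq> {C \<in> sets M. A \<inter> space M \<subseteq> C}"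
    using assms by auto
qed simp

lemma outer_prob_nonneg: "0 \<le> outer_prob M A"
  unfolding outer_prob_def by (rule cINF_greatest) auto

lemma outer_prob_tendsto_zero_subset:
  assumes "\<And>n. A n \<subseteq> B n" and "(\<lambda>n. outer_prob M (B n)) \<longlonglongrightarrow> 0"
  shows "(\<lambda>n. outer_prob M (A n)) \<longlonglongrightarrow> 0"
  by (rule real_tendsto_sandwich[OF _ _ tendsto_const assms(2)])
     (simp_all add: outer_prob_nonneg outer_prob_mono[OF assms(1)])

lemma minimax_value_uniform_perturbation:
  fixes G H :: "'p \<Rightarrow> 'x \<Rightarrow> real"
  assumes close: "\<And>phi x. phi \<in> Phi \<Longrightarrow> x \<in> Xi \<Longrightarrow> \<bar>G phi x - H phi x\<bar> \<le> d"
    and xi_max: "\<And>phi. phi \<in> Phi \<Longrightarrow> xi phi \<in> Xi \<and> (\<forall>t\<in>Xi. H phi t \<le> H phi (xi phi))"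
    and p: "p \<in> Phi" and q: "q \<in> Phi"
    and p_min: "(SUP x\<in>Xi. ereal (G p x)) \<le> (SUP x\<in>Xi. ereal (G q x))"
  shows "H p (xi p) \<le> H q (xi q) + 2 * d"
proof -
  have xp: "xi p \<in> Xi" using xi_max[OF p] by blast
  have "ereal (H p (xi p) - d) \<le> ereal (G p (xi p))"
    using close[OF p xp] by simp
  also have "\<dots> \<le> (SUP x\<in>Xi. ereal (G p x))" by (rule SUP_upper[OF xp])
  also have "\<dots> \<le> (SUP x\<in>Xi. ereal (G q x))" by (rule p_min)
  also have "\<dots> \<le> ereal (H q (xi q) + d)"
  proof (rule SUP_least)
    fix x assume x: "x \<in> Xi"
    have "G q x \<le> H q x + d" using close[OF q x] by simp
    also have "\<dots> \<le> H q (xi q) + d" using xi_max[OF q] x by simp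
    finally show "ereal (G q x) \<le> ereal (H q (xi q) + d)" by simp
  qed
  finally show ?thesis by simp
qed

theorem theorem1:
  fixes M :: "'w measure"
    and Phi :: "'p::euclidean_space set" and Xi :: "'x::euclidean_space set"
    and H :: "'p \<Rightarrow> 'x \<Rightarrow> real"
    and Hn :: "nat \<Rightarrow> 'w \<Rightarrow> 'p \<Rightarrow> 'x \<Rightarrow> real"
    and xi :: "'p \<Rightarrow> 'x"
    and phihat :: "nat \<Rightarrow> 'w \<Rightarrow> 'p" and phistar :: "'p"
  assumes "prob_space M"
    and random: "\<And>n phi x. (\<lambda>\<omega>. Hn n \<omega> phi x) \<in> borel_measurable M"
    and pointwise: "\<And>phi x. phi \<in> Phi \<Longrightarrow> x \<in> Xi \<Longrightarrow>
                       conv_in_prob M (\<lambda>n \<omega>. Hn n \<omega> phi x) (H phi x)"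
    and xi_def: "\<And>phi. phi \<in> Phi \<Longrightarrow> xi phi \<in> Xi \<and> (\<forall>t\<in>Xi. H phi t \<le> H phi (xi phi))"
    and phistar_def: "phistar \<in> Phi \<and>
          (\<forall>phi\<in>Phi. (SUP x\<in>Xi. ereal (H phistar x)) \<le> (SUP x\<in>Xi. ereal (H phi x)))"
    and A1: "\<And>n \<omega>. \<omega> \<in> space M \<Longrightarrow> phihat n \<omega> \<in> Phi \<and>
          (\<forall>phi\<in>Phi. (SUP x\<in>Xi. ereal (Hn n \<omega> (phihat n \<omega>) x)) \<le> (SUP x\<in>Xi. ereal (Hn n \<omega> phi x)))"
    and A2: "\<And>e. e > 0 \<Longrightarrow> (\<lambda>n. outer_prob M
              {\<omega> \<in> space M. \<exists>phi\<in>Phi. \<exists>x\<in>Xi. \<bar>Hn n \<omega> phi x - H phi x\<bar> > e}) \<longlonglongrightarrow> 0"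
    and A3: "\<And>phi e. phi \<in> Phi \<Longrightarrow> e > 0 \<Longrightarrow> \<exists>eta>0. \<forall>t\<in>Xi.
              norm (t - xi phi) > e \<longrightarrow> H phi (xi phi) - H phi t > eta"
    and A4: "\<And>e. e > 0 \<Longrightarrow> \<exists>eta>0. \<forall>phi\<in>Phi.
              norm (phi - phistar) > e \<longrightarrow> H phi (xi phi) - H phistar (xi phistar) > eta"
    and A5: "\<And>phi. phi \<in> Phi \<Longrightarrow> continuous_on Xi (H phi)"
  shows "conv_in_prob M phihat phistar"
  unfolding conv_in_prob_def
proof (intro allI impI)
  fix e :: real assume "e > 0"
  then obtain eta where "eta > 0" and margin: "\<And>phi. phi \<in> Phi \<Longrightarrow> norm (phi - phistar) > e \<Longrightarrow>
      H phi (xi phi) - H phistar (xi phistar) > eta"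
    using A4 by blast
  have far_implies_bad: "\<omega> \<in> {\<omega> \<in> space M. \<exists>phi\<in>Phi. \<exists>x\<in>Xi. \<bar>Hn n \<omega> phi x - H phi x\<bar> > eta / 2}"
    if "\<omega> \<in> space M" and far: "dist (phihat n \<omega>) phistar > e" for n \<omega>
  proof (rule ccontr)
    assume "\<omega> \<notin> {\<omega> \<in> space M. \<exists>phi\<in>Phi. \<exists>x\<in>Xi. \<bar>Hn n \<omega> phi x - H phi x\<bar> > eta / 2}"
    with \<open>\<omega> \<in> space M\<close> have "H (phihat n \<omega>) (xi (phihat n \<omega>)) \<le> H phistar (xi phistar) + 2 * (eta / 2)"
      using A1 phistar_def xi_def
      by (intro minimax_value_uniform_perturbation[where G = "Hn n \<omega>" and Phi = Phi and Xi = Xi])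
         (auto simp: not_less)
    with margin[of "phihat n \<omega>"] far A1[OF \<open>\<omega> \<in> space M\<close>] show False
      by (simp add: dist_norm)
  qed
  show "(\<lambda>n. outer_prob M {\<omega> \<in> space M. dist (phihat n \<omega>) phistar > e}) \<longlonglongrightarrow> 0"
    by (rule outer_prob_tendsto_zero_subset[OF _ A2[of "eta / 2"]])
       (use far_implies_bad \<open>eta > 0\<close> in auto)
qed

end
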